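(* Fix parameters $\ell_r>0$, $\ell_f>0$, $\bar r>0$, $\sigma\in(0,1)$, $\beta_{\max}>0$ and a sampling period $T>0$. Consider the kinematic bicycle model (KBM) with state $\chi=(r,\xi,v)\in\mathbb{R}^3$, $r>0$, and control $\omega=(a,\beta)\in\Omega_{\text{admis.}}:=\mathbb{R}\times[-\beta_{\max},\beta_{\max}]$, with dynamics $\dot\chi=f_{\text{KBM}}(\chi,\omega)$, where $$\dot r = v\cos(\xi-\beta),\qquad \dot\xi=-\tfrac{1}{r}v\sin(\xi-\beta)-\tfrac{v}{\ell_r}\sin(\beta),\qquad \dot v=a,$$ and let $h_{\bar r,\sigma}(\chi)=\frac{\sigma\cos(\xi/2)+1-\sigma}{\bar r}-\frac{1}{r}$. Let $\chi[n_0-1]$ be a state with $h_{\bar r,\sigma}(\chi[n_0-1])>0$ and let $\omega[n_0]\in\Omega_{\text{admis.}}$ be a fixed control. Let $\zeta:[0,\infty)\to\mathbb{R}^3$ be the solution of $\dot\zeta(t)=f_{\text{KBM}}(\zeta(t),\omega[n_0])$, $\zeta(0)=\chi[n_0-1]$ (i.e. the constant control $\omega[n_0]$ is applied, zero-order hold, starting from $\chi[n_0-1]$), so that the discretized KBM states are $\chi[n_0-1+n]=\zeta(nT)$ for $n\ge 0$. Let $\mathcal D\subseteq\{\chi: r>0\}$ be a set containing this trajectory on the relevant time interval, and let $L_{h_{\bar r,\sigma}}$ and $L_{f_{\text{KBM}}}$ be upper bounds on the Lipschitz constants (with respect to the Euclidean norm) on $\mathcal D$ of $h_{\bar r,\sigma}$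 and of $\chi\mapsto f_{\text{KBM}}(\chi,\omega[n_0])$, respectively. Let $\nu=\nu(\chi[n_0-1],\omega[n_0])>0$ solve $$\sqrt{2}\cdot L_{h_{\bar r,\sigma}}\cdot\lVert f_{\text{KBM}}(\chi[n_0-1],\omega[n_0])\rVert_2\cdot\nu\cdot e^{L_{f_{\text{KBM}}}\cdot\nu}=h_{\bar r,\sigma}(\chi[n_0-1]),$$ and define $$\Delta_{\max}(\chi[n_0-1],\omega[n_0]):=\max\big(\lfloor \nu/T\rfloor-1,\,0\big).$$ Then for every integer $n$ with $0\le n\le \Delta_{\max}(\chi[n_0-1],\omega[n_0])$ we have $h_{\bar r,\sigma}(\chi[n_0-1+n])>0$; i.e. holding the constant control $\omega[n_0]$ from state $\chi[n_0-1]$ preserves $h_{\bar r,\sigma}>0$ for at least $\Delta_{\max}$ samples.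
   Context: The KBM models an autonomous vehicle relative to a fixed point obstacle at the origin: $r$ is the distance to the origin, $\xi$ the orientation of the vehicle relative to the direction to the origin, $v$ the speed, $a$ the acceleration input and $\beta$ a (reparametrized) steering input. The set of safe states is $\{\chi: h_{\bar r,\sigma}(\chi)\ge 0\}$, which excludes a disk of radius $\bar r$ about the origin. Discrete-time signals are samples $x[n]=x(nT)$ of continuous-time signals, and inputs are applied with zero-order hold over each sampling period. $\lVert\cdot\rVert_2$ denotes the Euclidean norm on $\mathbb{R}^3$. *)

theory Defs
  imports "HOL-Analysis.Analysis"
begin

text \<open>States chi = (r, xi, v) are triples in real \<times> real \<times> real; the product norm
  on this type is the Euclidean norm on R^3.  Controls omega = (a, beta).\<close>

type_synonym kbm_state = "real \<times> real \<times> real"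
type_synonym kbm_input = "real \<times> real"

definition f_KBM :: "real \<Rightarrow> kbm_state \<Rightarrow> kbm_input \<Rightarrow> kbm_state" where
  "f_KBM l_r chi omega =
     (case chi of (r, xi, v) \<Rightarrow> case omega of (a, beta) \<Rightarrow>
       (v * cos (xi - beta),
        - (1 / r) * v * sin (xi - beta) - (v / l_r) * sin beta,
        a))"

definition h_cbf :: "real \<Rightarrow> real \<Rightarrow> kbm_state \<Rightarrow> real" where
  "h_cbf rbar sig chi =
     (case chi of (r, xi, v) \<Rightarrow> (sig * cos (xi / 2) + 1 - sig) / rbar - 1 / r)"

definition Omega_admis :: "real \<Rightarrow> kbm_input set" where
  "Omega_admis beta_max = UNIV \<times> {- beta_max .. beta_max}"

definition Delta_max :: "real \<Rightarrow> real \<Rightarrow> int" where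
  "Delta_max nu T = max (\<lfloor>nu / T\<rfloor> - 1) 0"

end

theory Submission
  imports Defs
begin

text \<open>Along the held-control trajectory \<open>\<zeta>' = F \<zeta>\<close>, with \<open>F\<close> \<open>L_f\<close>-Lipschitz on \<open>D\<close>,
  a Gronwall-type comparison gives \<open>norm (\<zeta> t - \<zeta> 0) \<le> norm (F (\<zeta> 0)) * t * exp (L_f * t)\<close>,
  so the \<open>L_h\<close>-Lipschitz function \<open>h\<close> drops by at most \<open>L_h * norm (F (\<zeta> 0)) * t * exp (L_f * t)\<close>
  by time \<open>t\<close>.  Every sample time \<open>n * T\<close> with \<open>n \<le> \<Delta>\<^sub>m\<^sub>a\<^sub>x\<close> is at most \<open>\<nu>\<close>, and by the
  defining equation of \<open>\<nu>\<close> the drop by time \<open>\<nu>\<close> is \<open>h (\<zeta> 0) / sqrt 2 < h (\<zeta> 0)\<close>.\<close>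

lemma sgn_inner_self: "sgn (x::'a::real_inner) \<bullet> x = norm x"
proof (cases "x = 0")
  case False
  have "sgn x \<bullet> x = (x \<bullet> x) / norm x" by (simp add: sgn_div_norm divide_inverse)
  also have "\<dots> = norm x" using False by (simp add: dot_square_norm power2_eq_square)
  finally show ?thesis .
qed simp

lemma norm_diff_le_of_derivative_bound:
  fixes z :: "real \<Rightarrow> 'a::real_inner" and g :: "real \<Rightarrow> real"
  assumes "a \<le> b"
    and cont_z: "continuous_on {a..b} z" and cont_g: "continuous_on {a..b} g"
    and deriv_z: "\<And>s. a < s \<Longrightarrow> s < b \<Longrightarrow> (z has_vector_derivative z' s) (at s)"
    and deriv_g: "\<And>s. a < s \<Longrightarrow> s < b \<Longrightarrow> (g has_real_derivative g' s) (at s)"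
    and bound: "\<And>s. a < s \<Longrightarrow> s < b \<Longrightarrow> norm (z' s) \<le> g' s"
  shows "norm (z b - z a) \<le> g b - g a"
proof -
  define e where "e = sgn (z b - z a)"
  define phi where "phi s = e \<bullet> z s - g s" for s
  have "phi b \<le> phi a"
  proof (rule DERIV_nonpos_imp_decreasing_open[OF \<open>a \<le> b\<close>])
    show "continuous_on {a..b} phi"
      unfolding phi_def using cont_z cont_g by (intro continuous_intros)
  next
    fix s assume s: "a < s" "s < b"
    have "(phi has_real_derivative e \<bullet> z' s - g' s) (at s)"
      unfolding phi_def using deriv_z[OF s] deriv_g[OF s]
      by (auto intro!: derivative_eq_intros
          simp: has_vector_derivative_def has_field_derivative_def fun_eq_iff algebra_simps)
    moreover have "e \<bullet> z' s \<le> g' s"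
    proof -
      have "e \<bullet> z' s \<le> norm e * norm (z' s)" by (rule norm_cauchy_schwarz)
      also have "\<dots> \<le> norm (z' s)" by (simp add: e_def norm_sgn mult_left_le_one_le)
      finally show ?thesis using bound[OF s] by linarith
    qed
    ultimately show "\<exists>y. (phi has_real_derivative y) (at s) \<and> y \<le> 0" by auto
  qed
  then show ?thesis
    using sgn_inner_self[of "z b - z a"] by (simp add: phi_def e_def inner_diff_right)
qed

lemma first_nonpos_time:
  fixes f :: "real \<Rightarrow> real"
  assumes cont: "continuous_on {a..b} f" and "0 < f a" and "t \<in> {a..b}" and "f t \<le> 0"
  obtains t1 where "t1 \<in> {a<..b}" and "f t1 \<le> 0" and "\<And>s. a \<le> s \<Longrightarrow> s < t1 \<Longrightarrow> 0 < f s"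
proof -
  define S where "S = {s \<in> {a..b}. f s \<le> 0}"
  have "closed S"
    unfolding S_def by (rule continuous_on_closed_Collect_le[OF cont continuous_on_const]) simp
  moreover have "S \<noteq> {}" using assms by (auto simp: S_def)
  moreover have S_bdd: "bdd_below S" by (auto simp: S_def intro: bdd_belowI[of _ a])
  ultimately have "Inf S \<in> S" by (rule closed_contains_Inf[rotated -1])
  moreover have "0 < f s" if "a \<le> s" "s < Inf S" for s
  proof (rule ccontr)
    assume "\<not> 0 < f s"
    with that \<open>Inf S \<in> S\<close> have "s \<in> S" by (auto simp: S_def)
    then have "Inf S \<le> s" using S_bdd by (rule cInf_lower)
    with that show False by simp
  qed
  moreover have "Inf S \<noteq> a" using \<open>Inf S \<in> S\<close> \<open>0 < f a\<close> by (auto simp: S_def)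
  ultimately show thesis by (intro that[of "Inf S"]) (auto simp: S_def)
qed

lemma lipschitz_ode_displacement_less:
  fixes z :: "real \<Rightarrow> 'a::real_inner"
  assumes "0 < eps" and lip: "L-lipschitz_on D F" and in_D: "z ` {0..tau} \<subseteq> D"
    and ode: "\<And>s. s \<in> {0..tau} \<Longrightarrow> (z has_vector_derivative F (z s)) (at s within {0..tau})"
    and t: "t \<in> {0..tau}"
  shows "norm (z t - z 0) < (norm (F (z 0)) * t + eps) * exp (L * t)"
proof (rule ccontr)
  define K where "K = norm (F (z 0))"
  \<comment> \<open>\<open>g\<close> solves \<open>g' = K * exp (L * s) + L * g\<close> with \<open>g 0 = eps > u 0\<close>; at the first time \<open>t1\<close>
     where \<open>u\<close> reaches \<open>g\<close>, the bound \<open>norm (F (z s)) \<le> K + L * u s < g' s\<close> on \<open>(0, t1)\<close> gives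
     \<open>u t1 \<le> g t1 - eps\<close>.\<close>
  define g where "g s = (K * s + eps) * exp (L * s)" for s
  define u where "u s = norm (z s - z 0)" for s
  have "0 \<le> L" using lip by (rule lipschitz_on_nonneg)
  have cont_z: "continuous_on {0..tau} z"
    unfolding continuous_on_eq_continuous_within
    using ode by (blast intro: has_vector_derivative_continuous)
  assume "\<not> ?thesis"
  then have crossed: "g t - u t \<le> 0" by (simp add: g_def u_def K_def)
  have "continuous_on {0..tau} (\<lambda>s. g s - u s)"
    unfolding g_def u_def using cont_z by (intro continuous_intros)
  moreover have "0 < g 0 - u 0" using \<open>0 < eps\<close> by (simp add: g_def u_def)
  ultimately obtain t1 where t1: "t1 \<in> {0<..tau}" "g t1 - u t1 \<le> 0"
    and below: "\<And>s. 0 \<le> s \<Longrightarrow> s < t1 \<Longrightarrow> 0 < g s - u s"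
    using first_nonpos_time[where f = "\<lambda>s. g s - u s", OF _ _ t crossed] by blast
  have "u t1 \<le> g t1 - g 0"
    unfolding u_def
  proof (rule norm_diff_le_of_derivative_bound
      [where z' = "\<lambda>s. F (z s)" and g' = "\<lambda>s. K * exp (L * s) + L * g s"])
    show "continuous_on {0..t1} z" using cont_z t1 by (auto intro: continuous_on_subset)
    show "continuous_on {0..t1} g" unfolding g_def by (intro continuous_intros)
  next
    fix s assume s: "0 < s" "s < t1"
    then show "(z has_vector_derivative F (z s)) (at s)"
      using ode[of s] t1 at_within_Icc_at[of 0 s tau] by simp
    show "(g has_real_derivative K * exp (L * s) + L * g s) (at s)"
      unfolding g_def by (auto intro!: derivative_eq_intros simp: algebra_simps)
    have "z s \<in> D" "z 0 \<in> D" using in_D s t1 by (auto simp: image_subset_iff)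
    then have "norm (F (z s) - F (z 0)) \<le> L * u s"
      using lipschitz_onD[OF lip] by (simp add: u_def dist_norm)
    then have "norm (F (z s)) \<le> K + L * u s"
      using norm_triangle_ineq[of "F (z s) - F (z 0)" "F (z 0)"] by (simp add: K_def)
    also have "\<dots> \<le> K * exp (L * s) + L * g s"
      using below[of s] s \<open>0 \<le> L\<close>
      by (intro add_mono mult_left_mono) (auto simp: K_def mult_le_cancel_left1)
    finally show "norm (F (z s)) \<le> K * exp (L * s) + L * g s" .
  qed (use t1 in auto)
  moreover have "g 0 = eps" by (simp add: g_def)
  ultimately show False using t1(2) \<open>0 < eps\<close> by simp
qed

lemma lipschitz_ode_displacement_le:
  fixes z :: "real \<Rightarrow> 'a::real_inner"
  assumes "L-lipschitz_on D F" and "z ` {0..tau} \<subseteq> D"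
    and "\<And>s. s \<in> {0..tau} \<Longrightarrow> (z has_vector_derivative F (z s)) (at s within {0..tau})"
    and "t \<in> {0..tau}"
  shows "norm (z t - z 0) \<le> norm (F (z 0)) * t * exp (L * t)"
proof (rule field_le_epsilon)
  fix d :: real assume "0 < d"
  then have "0 < d / exp (L * t)" by simp
  from lipschitz_ode_displacement_less[OF this assms]
  show "norm (z t - z 0) \<le> norm (F (z 0)) * t * exp (L * t) + d"
    by (simp add: algebra_simps)
qed

lemma lipschitz_along_ode_lower_bound:
  fixes z :: "real \<Rightarrow> 'a::real_inner" and h :: "'a \<Rightarrow> real"
  assumes lip_h: "L_h-lipschitz_on D h" and lip_F: "L_f-lipschitz_on D F"
    and in_D: "z ` {0..tau} \<subseteq> D"
    and ode: "\<And>s. s \<in> {0..tau} \<Longrightarrow> (z has_vector_derivative F (z s)) (at s within {0..tau})"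
    and t: "t \<in> {0..tau}"
  shows "h (z 0) - L_h * norm (F (z 0)) * t * exp (L_f * t) \<le> h (z t)"
proof -
  have "z t \<in> D" "z 0 \<in> D" using in_D t by (auto simp: image_subset_iff)
  then have "\<bar>h (z t) - h (z 0)\<bar> \<le> L_h * norm (z t - z 0)"
    using lipschitz_onD[OF lip_h] by (simp add: dist_norm dist_real_def)
  also have "\<dots> \<le> L_h * (norm (F (z 0)) * t * exp (L_f * t))"
    using lipschitz_ode_displacement_le[OF lip_F in_D ode t] lipschitz_on_nonneg[OF lip_h]
    by (rule mult_left_mono)
  finally show ?thesis by (simp add: mult.assoc)
qed

lemma lipschitz_along_ode_pos:
  fixes z :: "real \<Rightarrow> 'a::real_inner" and h :: "'a \<Rightarrow> real"
  assumes lip_h: "L_h-lipschitz_on D h" and lip_F: "L_f-lipschitz_on D F"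
    and in_D: "z ` {0..tau} \<subseteq> D"
    and ode: "\<And>s. s \<in> {0..tau} \<Longrightarrow> (z has_vector_derivative F (z s)) (at s within {0..tau})"
    and t: "t \<in> {0..tau}" and "t \<le> nu"
    and margin: "L_h * norm (F (z 0)) * nu * exp (L_f * nu) < h (z 0)"
  shows "0 < h (z t)"
proof -
  have "L_h * norm (F (z 0)) * t * exp (L_f * t) \<le> L_h * norm (F (z 0)) * nu * exp (L_f * nu)"
    using \<open>t \<le> nu\<close> t lipschitz_on_nonneg[OF lip_h] lipschitz_on_nonneg[OF lip_F]
    by (auto simp: mult.assoc intro!: mult_left_mono mult_mono)
  then show ?thesis
    using lipschitz_along_ode_lower_bound[OF lip_h lip_F in_D ode t] margin by linarith
qed

lemma Delta_max_times_le:
  assumes "0 < T" and "0 \<le> nu"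
  shows "real_of_int (Delta_max nu T) * T \<le> nu"
proof -
  have "real_of_int \<lfloor>nu / T\<rfloor> - 1 \<le> nu / T" using of_int_floor_le[of "nu / T"] by linarith
  moreover have "0 \<le> nu / T" using assms by simp
  ultimately have "real_of_int (Delta_max nu T) \<le> nu / T" by (simp add: Delta_max_def of_int_max)
  then show ?thesis using \<open>0 < T\<close> by (simp add: le_divide_eq)
qed

theorem lemma2:
  fixes l_r l_f rbar sig beta_max T :: real
    and chi :: "int \<Rightarrow> kbm_state" and n0 :: int
    and omega :: kbm_input
    and zeta :: "real \<Rightarrow> kbm_state"
    and D :: "kbm_state set"
    and L_h L_f nu :: real
  assumes "l_r > 0" and "l_f > 0" and "rbar > 0" and "0 < sig" and "sig < 1"
    and "beta_max > 0" and "T > 0"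
    and chi0_r: "fst (chi (n0 - 1)) > 0"
    and chi0_safe: "h_cbf rbar sig (chi (n0 - 1)) > 0"
    and omega_adm: "omega \<in> Omega_admis beta_max"
    and zeta_init: "zeta 0 = chi (n0 - 1)"
    and zeta_ode: "\<And>t. t \<ge> 0 \<Longrightarrow>
          (zeta has_vector_derivative f_KBM l_r (zeta t) omega) (at t within {0..})"
    and samples: "\<And>n::nat. chi (n0 - 1 + int n) = zeta (real n * T)"
    and D_pos: "D \<subseteq> {x. fst x > 0}"
    and D_traj: "\<And>t. 0 \<le> t \<Longrightarrow> t \<le> real_of_int (Delta_max nu T) * T \<Longrightarrow> zeta t \<in> D"
    and Lip_h: "L_h-lipschitz_on D (h_cbf rbar sig)"
    and Lip_f: "L_f-lipschitz_on D (\<lambda>x. f_KBM l_r x omega)"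
    and nu_pos: "nu > 0"
    and nu_eq: "sqrt 2 * L_h * norm (f_KBM l_r (chi (n0 - 1)) omega) * nu * exp (L_f * nu)
                 = h_cbf rbar sig (chi (n0 - 1))"
  shows "\<forall>n::int. 0 \<le> n \<and> n \<le> Delta_max nu T \<longrightarrow> h_cbf rbar sig (chi (n0 - 1 + n)) > 0"
proof (intro allI impI)
  fix n :: int assume n: "0 \<le> n \<and> n \<le> Delta_max nu T"
  define tau where "tau = real_of_int (Delta_max nu T) * T"
  define t where "t = real_of_int n * T"
  define P where "P = L_h * norm (f_KBM l_r (zeta 0) omega) * nu * exp (L_f * nu)"
  have t: "t \<in> {0..tau}" using n \<open>T > 0\<close> by (auto simp: t_def tau_def)
  have "t \<le> nu"
    using t Delta_max_times_le[OF \<open>T > 0\<close> less_imp_le[OF nu_pos]] by (simp add: tau_def)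
  have ode: "(zeta has_vector_derivative f_KBM l_r (zeta s) omega) (at s within {0..tau})"
    if "s \<in> {0..tau}" for s
    using zeta_ode[of s] that by (auto intro: has_vector_derivative_within_subset)
  have in_D: "zeta ` {0..tau} \<subseteq> D" using D_traj by (auto simp: tau_def)
  have h0: "h_cbf rbar sig (zeta 0) = sqrt 2 * P"
    using nu_eq zeta_init by (simp add: P_def mult.assoc)
  with chi0_safe zeta_init have "0 < P" by (simp add: zero_less_mult_iff)
  then have "1 * P < sqrt 2 * P" by (intro mult_strict_right_mono) auto
  with h0 have "P < h_cbf rbar sig (zeta 0)" by simp
  then have "0 < h_cbf rbar sig (zeta t)"
    using lipschitz_along_ode_pos[OF Lip_h Lip_f in_D ode t \<open>t \<le> nu\<close>] by (simp add: P_def)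
  moreover have "chi (n0 - 1 + n) = zeta t" using samples[of "nat n"] n by (simp add: t_def)
  ultimately show "h_cbf rbar sig (chi (n0 - 1 + n)) > 0" by simp
qed

end
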